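(* Let $p\ge1$ and $s>0$ be integers and let $S=\{a_1,\dots,a_{3p}\}$ be a multiset of positive integers with $s/4<a_i<s/2$ for all $i$ and $\sum_{i=1}^{3p}a_i=sp$. Let $\mathbb T=(\mathbb V,\mathbb E)$ be the spider with a center vertex $r$ and, for each $i$, a leg (a path starting at $r$) with exactly $a_i$ edges, the legs being internally disjoint. Then the following are equivalent: (i) $S$ can be partitioned into $p$ sub-multisets of size exactly three, each summing to $s$; (ii) $\mathbb T$ has an $(s+1)$-completion set of size $\frac{ps(s-1)}{2}$; (iii) $\mathbb E$ can be partitioned into $p$ edge-disjoint subtrees of $\mathbb T$, each having exactly $s$ edges.
   Context: A connected graph $H$ has a $(k,1)$-cover if every edge of $H$ lies in at least one clique of order $k$. For a connected graph $G=(V,E)$, a set $E'\subseteq(V\times V)\setminus E$ of non-edges is a $k$-completion set of $G$ if $G\cup E'$ has a $(k,1)$-cover. *)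

theory Defs
  imports Main "HOL-Library.Multiset"
begin

definition is_edge_set :: "'v set \<Rightarrow> 'v set set \<Rightarrow> bool" where
  "is_edge_set V E \<longleftrightarrow> (\<forall>e\<in>E. e \<subseteq> V \<and> card e = 2)"

definition adj_rel :: "'v set set \<Rightarrow> ('v \<times> 'v) set" where
  "adj_rel E = {(x, y). {x, y} \<in> E \<and> x \<noteq> y}"

definition connected_graph :: "'v set \<Rightarrow> 'v set set \<Rightarrow> bool" where
  "connected_graph V E \<longleftrightarrow> is_edge_set V E \<and>
     (\<forall>u\<in>V. \<forall>v\<in>V. (u, v) \<in> (adj_rel E)\<^sup>*)"

definition is_clique :: "'v set set \<Rightarrow> 'v set \<Rightarrow> bool" where
  "is_clique E C \<longleftrightarrow> (\<forall>x\<in>C. \<forall>y\<in>C. x \<noteq> y \<longrightarrow> {x, y} \<in> E)"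

definition has_k1_cover :: "nat \<Rightarrow> 'v set \<Rightarrow> 'v set set \<Rightarrow> bool" where
  "has_k1_cover k V E \<longleftrightarrow> connected_graph V E \<and>
     (\<forall>e\<in>E. \<exists>C. C \<subseteq> V \<and> finite C \<and> card C = k \<and> e \<subseteq> C \<and> is_clique E C)"

definition non_edges :: "'v set \<Rightarrow> 'v set set \<Rightarrow> 'v set set" where
  "non_edges V E = {{x, y} | x y. x \<in> V \<and> y \<in> V \<and> x \<noteq> y} - E"

definition is_completion_set :: "nat \<Rightarrow> 'v set \<Rightarrow> 'v set set \<Rightarrow> 'v set set \<Rightarrow> bool" where
  "is_completion_set k V E E' \<longleftrightarrow> E' \<subseteq> non_edges V E \<and> has_k1_cover k V (E \<union> E')"

text \<open>A tree given by its edge set F (vertex set = vertices covered by F):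
  nonempty, connected and acyclic, where acyclic is expressed as: no edge lies on a cycle,
  i.e. removing any edge disconnects its two endpoints.\<close>
definition is_tree_edges :: "'v set set \<Rightarrow> bool" where
  "is_tree_edges F \<longleftrightarrow> F \<noteq> {} \<and> finite F \<and> connected_graph (\<Union>F) F \<and>
     (\<forall>x y. {x, y} \<in> F \<longrightarrow> x \<noteq> y \<longrightarrow> (x, y) \<notin> (adj_rel (F - {{x, y}}))\<^sup>*)"

text \<open>The spider with legs of lengths as!0, ..., as!(n-1): center None,
  the vertices of leg i are Some (i,1), ..., Some (i, as!i), with Some (i,1) adjacent to the center.\<close>
definition spider_V :: "nat list \<Rightarrow> (nat \<times> nat) option set" where
  "spider_V as = insert None {Some (i, j) | i j. i < length as \<and> 1 \<le> j \<and> j \<le> as ! i}"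

definition spider_E :: "nat list \<Rightarrow> (nat \<times> nat) option set set" where
  "spider_E as =
     {{None, Some (i, 1)} | i. i < length as \<and> 1 \<le> as ! i} \<union>
     {{Some (i, j), Some (i, Suc j)} | i j. i < length as \<and> 1 \<le> j \<and> Suc j \<le> as ! i}"

end

theory Submission
  imports Defs
begin

(*
  Grouping the legs into classes of total length s (which are triples, since s/4 < a_i < s/2)
  gives (ii) and (iii) at once: the legs of a class form a subtree with s edges, and completing
  its s + 1 vertices (the centre and the vertices of its legs) to a clique adds
  C(s+1, 2) - s = s(s-1)/2 non-edges.

  Conversely, a subtree with s edges contains the centre, because every leg is shorter than s;
  so with any edge of leg i it also contains the first edge of leg i, and by disjointness every
  leg lies in a single subtree. The subtrees therefore group the legs into classes of length s.

  For an (s+1)-completion G with exactly ps(s-1)/2 new edges we discharge: every edge of G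
  carries two units, both going to its endpoint farther from the centre in BFS distance, one to
  each endpoint if both are equally far. With k = s + 1, every non-central vertex v receives at
  least k, since the edge to a parent lies in a k-clique all of whose vertices are at most as far
  as v; but G has ps(s+1)/2 = k(|V| - 1)/2 edges. Hence every v receives exactly k, and its
  backward neighbourhood (v and its neighbours no farther than v) is a k-clique with a unique
  vertex closer to the centre. Removing that vertex leaves blocks of s equidistant vertices
  which partition the ps non-central vertices, so there are p such cliques, and together they
  contain all ps spider edges. As the spider is a forest, a clique spans at most s spider edges,
  and fewer if it avoids the centre (it then meets two legs). So every clique contains the
  centre, all vertices are at distance 1, consecutive vertices of a leg share their clique, and
  the cliques group the legs into classes of length s.
*)

section \<open>Graphs given by edge sets\<close>

lemma rtrancl_adj_rel_mono:
  "E1 \<subseteq> E2 \<Longrightarrow> (x, y) \<in> (adj_rel E1)\<^sup>* \<Longrightarrow> (x, y) \<in> (adj_rel E2)\<^sup>*"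
  by (rule rtrancl_mono[THEN subsetD]) (auto simp: adj_rel_def)

lemma rtrancl_adj_rel_sym: "(x, y) \<in> (adj_rel E)\<^sup>* \<Longrightarrow> (y, x) \<in> (adj_rel E)\<^sup>*"
proof -
  have "sym ((adj_rel E)\<^sup>*)"
    by (rule sym_rtrancl) (auto simp: sym_def adj_rel_def insert_commute)
  then show "(x, y) \<in> (adj_rel E)\<^sup>* \<Longrightarrow> (y, x) \<in> (adj_rel E)\<^sup>*"
    by (auto dest: symD)
qed

lemma adj_rel_path_crosses:
  assumes "(x, y) \<in> (adj_rel E)\<^sup>*" "(x \<in> S) \<noteq> (y \<in> S)"
  shows "\<exists>a b. {a, b} \<in> E \<and> a \<in> S \<and> b \<notin> S"
  using assms
proof (induction rule: rtrancl_induct)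
  case (step y z)
  then have "{y, z} \<in> E" by (simp add: adj_rel_def)
  then show ?case
    using step by (cases "(x \<in> S) = (y \<in> S)") (auto simp: insert_commute)
qed simp

definition complete_edges :: "'a set \<Rightarrow> 'a set set" where
  "complete_edges K = {e. e \<subseteq> K \<and> card e = 2}"

lemma finite_complete_edges: "finite K \<Longrightarrow> finite (complete_edges K)"
  unfolding complete_edges_def by (rule finite_subset[of _ "Pow K"]) auto

lemma card_complete_edges: "finite K \<Longrightarrow> card (complete_edges K) = card K choose 2"
  unfolding complete_edges_def by (rule n_subsets)

lemma complete_edges_disjoint:
  assumes "K \<inter> K' \<subseteq> {x}"
  shows "complete_edges K \<inter> complete_edges K' = {}"
proof (rule equals0I)
  fix e assume "e \<in> complete_edges K \<inter> complete_edges K'"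
  then have "e \<subseteq> {x}" "card e = 2" using assms by (auto simp: complete_edges_def)
  then show False using card_mono[of "{x}" e] by simp
qed

lemma has_k1_cover_UN_complete_edges:
  assumes "V = (\<Union>j\<in>J. K j)" "\<forall>j\<in>J. r \<in> K j \<and> finite (K j) \<and> card (K j) = k"
  shows "has_k1_cover k V (\<Union>j\<in>J. complete_edges (K j))"
proof -
  let ?E = "\<Union>j\<in>J. complete_edges (K j)"
  have clique: "is_clique ?E (K j)" if "j \<in> J" for j
    using that by (auto simp: is_clique_def complete_edges_def)
  have root: "(r, v) \<in> (adj_rel ?E)\<^sup>* \<and> (v, r) \<in> (adj_rel ?E)\<^sup>*" if "v \<in> V" for v
  proof (cases "v = r")
    case False
    from that assms obtain j where "j \<in> J" "v \<in> K j" "r \<in> K j" by blast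
    with False have "{r, v} \<in> complete_edges (K j)" by (simp add: complete_edges_def)
    with \<open>j \<in> J\<close> have "{r, v} \<in> ?E" "{v, r} \<in> ?E" by (auto simp: insert_commute)
    with False have "(r, v) \<in> adj_rel ?E" "(v, r) \<in> adj_rel ?E" by (auto simp: adj_rel_def)
    then show ?thesis by blast
  qed simp
  have "(u, v) \<in> (adj_rel ?E)\<^sup>*" if "u \<in> V" "v \<in> V" for u v
    using root[OF that(1)] root[OF that(2)] by (meson rtrancl_trans)
  moreover have "is_edge_set V ?E"
    using assms(1) by (auto simp: is_edge_set_def complete_edges_def)
  moreover have "\<exists>C. C \<subseteq> V \<and> finite C \<and> card C = k \<and> e \<subseteq> C \<and> is_clique ?E C"
    if "e \<in> ?E" for e
  proof -
    from that obtain j where "j \<in> J" "e \<subseteq> K j" by (auto simp: complete_edges_def)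
    with assms clique show ?thesis by (intro exI[of _ "K j"]) auto
  qed
  ultimately show ?thesis
    unfolding has_k1_cover_def connected_graph_def by blast
qed

section \<open>Legs of the spider\<close>

definition leg_vertex :: "nat \<Rightarrow> nat \<Rightarrow> (nat \<times> nat) option" where
  "leg_vertex i k = (if k = 0 then None else Some (i, k))"

definition leg_edges :: "nat list \<Rightarrow> nat \<Rightarrow> (nat \<times> nat) option set set" where
  "leg_edges as i = (\<lambda>k. {leg_vertex i k, leg_vertex i (Suc k)}) ` {..<as ! i}"

definition leg_vertices :: "nat list \<Rightarrow> nat \<Rightarrow> (nat \<times> nat) option set" where
  "leg_vertices as i = Some ` ({i} \<times> {1..as ! i})"

lemma leg_vertex_0 [simp]: "leg_vertex i 0 = None"
  and leg_vertex_Suc [simp]: "leg_vertex i (Suc k) = Some (i, Suc k)"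
  by (simp_all add: leg_vertex_def)

lemma spider_E_eq_UN_leg_edges: "spider_E as = (\<Union>i<length as. leg_edges as i)"
proof (rule set_eqI)
  fix e
  show "e \<in> spider_E as \<longleftrightarrow> e \<in> (\<Union>i<length as. leg_edges as i)"
  proof
    assume "e \<in> spider_E as"
    then consider (center) i where "e = {None, Some (i, 1)}" "i < length as" "1 \<le> as ! i"
      | (outer) i j where "e = {Some (i, j), Some (i, Suc j)}" "i < length as" "1 \<le> j"
          "Suc j \<le> as ! i"
      unfolding spider_E_def by (elim UnE CollectE exE conjE) metis+
    then show "e \<in> (\<Union>i<length as. leg_edges as i)"
    proof cases
      case (center i)
      then show ?thesis by (auto simp: leg_edges_def intro!: UN_I[of i] image_eqI[of _ _ 0])
    next
      case (outer i j)
      then show ?thesis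
        by (auto simp: leg_edges_def leg_vertex_def intro!: UN_I[of i] image_eqI[of _ _ j])
    qed
  next
    assume "e \<in> (\<Union>i<length as. leg_edges as i)"
    then obtain i k where ik: "i < length as" "k < as ! i"
      "e = {leg_vertex i k, leg_vertex i (Suc k)}"
      unfolding leg_edges_def by auto
    show "e \<in> spider_E as"
    proof (cases k)
      case 0
      then show ?thesis using ik unfolding spider_E_def by auto
    next
      case (Suc j)
      then show ?thesis using ik unfolding spider_E_def
        by (intro UnI2 CollectI exI[of _ i] exI[of _ "Suc j"]) simp
    qed
  qed
qed

lemma spider_V_eq_insert_UN_leg_vertices:
  "spider_V as = insert None (\<Union>i<length as. leg_vertices as i)"
  unfolding spider_V_def leg_vertices_def by auto

lemma spider_E_cases:
  assumes "e \<in> spider_E as"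
  obtains i k where "i < length as" "k < as ! i" "e = {leg_vertex i k, leg_vertex i (Suc k)}"
  using assms unfolding spider_E_eq_UN_leg_edges leg_edges_def by auto

lemma None_notin_leg_vertices [simp]: "None \<notin> leg_vertices as i"
  by (auto simp: leg_vertices_def)

lemma finite_leg_vertices [simp]: "finite (leg_vertices as i)"
  and finite_leg_edges [simp]: "finite (leg_edges as i)"
  by (simp_all add: leg_vertices_def leg_edges_def)

lemma finite_spider_V [simp]: "finite (spider_V as)"
  and finite_spider_E [simp]: "finite (spider_E as)"
  by (simp_all add: spider_V_eq_insert_UN_leg_vertices spider_E_eq_UN_leg_edges)

lemma leg_vertices_disjoint: "i \<noteq> i' \<Longrightarrow> leg_vertices as i \<inter> leg_vertices as i' = {}"
  by (auto simp: leg_vertices_def)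

lemma leg_edges_disjoint: "i \<noteq> i' \<Longrightarrow> leg_edges as i \<inter> leg_edges as i' = {}"
  unfolding leg_edges_def by (auto simp: leg_vertex_def doubleton_eq_iff split: if_splits)

lemma UN_leg_edges_disjoint:
  assumes "A \<inter> B = {}"
  shows "(\<Union>i\<in>A. leg_edges as i) \<inter> (\<Union>i\<in>B. leg_edges as i) = {}"
proof (rule equals0I)
  fix e assume "e \<in> (\<Union>i\<in>A. leg_edges as i) \<inter> (\<Union>i\<in>B. leg_edges as i)"
  then obtain i i' where "i \<in> A" "i' \<in> B" "e \<in> leg_edges as i" "e \<in> leg_edges as i'"
    by blast
  with assms leg_edges_disjoint[of i i' as] show False by blast
qed

lemma UN_leg_vertices_disjoint:
  assumes "A \<inter> B = {}"
  shows "(\<Union>i\<in>A. leg_vertices as i) \<inter> (\<Union>i\<in>B. leg_vertices as i) = {}"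
proof (rule equals0I)
  fix x assume "x \<in> (\<Union>i\<in>A. leg_vertices as i) \<inter> (\<Union>i\<in>B. leg_vertices as i)"
  then obtain i i' where "i \<in> A" "i' \<in> B" "x \<in> leg_vertices as i" "x \<in> leg_vertices as i'"
    by blast
  with assms leg_vertices_disjoint[of i i' as] show False by blast
qed

lemma card_leg_vertices: "card (leg_vertices as i) = as ! i"
  unfolding leg_vertices_def by (subst card_image) (auto simp: card_cartesian_product)

lemma card_leg_edges: "card (leg_edges as i) = as ! i"
  unfolding leg_edges_def
  by (subst card_image) (auto simp: inj_on_def leg_vertex_def doubleton_eq_iff split: if_splits)

lemma leg_edge_subset: "e \<in> leg_edges as i \<Longrightarrow> e \<subseteq> insert None (leg_vertices as i)"
  unfolding leg_edges_def by (auto simp: leg_vertex_def leg_vertices_def split: if_splits)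

lemma card_leg_edge: "e \<in> leg_edges as i \<Longrightarrow> card e = 2"
  unfolding leg_edges_def by (auto simp: leg_vertex_def)

lemma leg_edge_meets_leg_vertices:
  "e \<in> leg_edges as i \<Longrightarrow> \<exists>v\<in>e. v \<in> leg_vertices as i"
  unfolding leg_edges_def leg_vertices_def by force

lemma card_spider_E: "card (spider_E as) = sum_list as"
  unfolding spider_E_eq_UN_leg_edges
  by (subst card_UN_disjoint)
    (auto simp: leg_edges_disjoint card_leg_edges sum_list_sum_nth atLeast0LessThan)

lemma card_spider_V: "card (spider_V as) = Suc (sum_list as)"
  unfolding spider_V_eq_insert_UN_leg_vertices
  by (subst card_insert_disjoint) (auto simp: card_UN_disjoint leg_vertices_disjoint
      card_leg_vertices sum_list_sum_nth atLeast0LessThan)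

lemma leg_vertex_neighbour:
  assumes "{a, b} \<in> spider_E as" "a \<in> leg_vertices as i" "b \<notin> leg_vertices as i"
  shows "a = Some (i, 1) \<and> b = None"
proof -
  obtain i' k where ik: "i' < length as" "k < as ! i'"
    "{a, b} = {leg_vertex i' k, leg_vertex i' (Suc k)}"
    using assms(1) by (rule spider_E_cases)
  from assms(2) obtain m where m: "a = Some (i, m)" "1 \<le> m" "m \<le> as ! i"
    by (auto simp: leg_vertices_def)
  show ?thesis
  proof (cases "a = leg_vertex i' k")
    case True
    then have "b = leg_vertex i' (Suc k)"
      using ik m by (auto simp: doubleton_eq_iff leg_vertex_def split: if_splits)
    then show ?thesis
      using True m ik assms(3) by (auto simp: leg_vertices_def leg_vertex_def split: if_splits)
  next
    case False
    then have "a = leg_vertex i' (Suc k)" "b = leg_vertex i' k"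
      using ik by (auto simp: doubleton_eq_iff)
    then show ?thesis
      using assms(3) m by (cases k) (auto simp: leg_vertices_def leg_vertex_def)
  qed
qed

lemma spider_acyclic:
  assumes "{x, y} \<in> spider_E as" "x \<noteq> y"
  shows "(x, y) \<notin> (adj_rel (spider_E as - {{x, y}}))\<^sup>*"
proof
  assume path: "(x, y) \<in> (adj_rel (spider_E as - {{x, y}}))\<^sup>*"
  obtain i k where ik: "i < length as" "k < as ! i"
    "{x, y} = {leg_vertex i k, leg_vertex i (Suc k)}"
    using assms(1) by (rule spider_E_cases)
  define S where "S = {Some (i, m) | m. Suc k \<le> m}"
  have "(x \<in> S) \<noteq> (y \<in> S)"
    using ik(3) assms(2) by (auto simp: S_def leg_vertex_def doubleton_eq_iff split: if_splits)
  from adj_rel_path_crosses[OF path this] obtain a b where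
    ab: "{a, b} \<in> spider_E as" "{a, b} \<noteq> {x, y}" "a \<in> S" "b \<notin> S" by blast
  obtain i' k' where ik': "{a, b} = {leg_vertex i' k', leg_vertex i' (Suc k')}"
    using ab(1) by (rule spider_E_cases)
  from ab(3) obtain m where m: "a = Some (i, m)" "Suc k \<le> m" by (auto simp: S_def)
  show False
  proof (cases "a = leg_vertex i' k'")
    case True
    then have "b = leg_vertex i' (Suc k')"
      using ik' m by (auto simp: doubleton_eq_iff leg_vertex_def split: if_splits)
    then show ?thesis using True m ab(4) by (auto simp: S_def leg_vertex_def split: if_splits)
  next
    case False
    then have a: "a = leg_vertex i' (Suc k')" "b = leg_vertex i' k'"
      using ik' by (auto simp: doubleton_eq_iff)
    then have "i' = i" "k' = k"
      using m ab(4) by (cases k'; auto simp: S_def leg_vertex_def)+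
    then show ?thesis using ab(2) ik(3) a by (auto simp: insert_commute)
  qed
qed

fun spider_parent :: "(nat \<times> nat) option \<Rightarrow> (nat \<times> nat) option" where
  "spider_parent None = None"
| "spider_parent (Some (i, k)) = leg_vertex i (k - 1)"

lemma spider_edges_within_subset:
  "{e \<in> spider_E as. e \<subseteq> S} \<subseteq>
     (\<lambda>c. {spider_parent c, c}) ` {c \<in> S. c \<noteq> None \<and> spider_parent c \<in> S}"
proof
  fix e assume e: "e \<in> {e \<in> spider_E as. e \<subseteq> S}"
  then obtain i k where "e = {leg_vertex i k, leg_vertex i (Suc k)}"
    by (auto elim: spider_E_cases)
  with e show "e \<in> (\<lambda>c. {spider_parent c, c}) ` {c \<in> S. c \<noteq> None \<and> spider_parent c \<in> S}"
    by (intro image_eqI[of _ _ "Some (i, Suc k)"]) auto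
qed

lemma card_spider_edges_within_le:
  assumes "finite S"
  shows "card {e \<in> spider_E as. e \<subseteq> S} \<le> card {c \<in> S. c \<noteq> None \<and> spider_parent c \<in> S}"
proof -
  have "card {e \<in> spider_E as. e \<subseteq> S}
      \<le> card ((\<lambda>c. {spider_parent c, c}) ` {c \<in> S. c \<noteq> None \<and> spider_parent c \<in> S})"
    by (rule card_mono[OF _ spider_edges_within_subset]) (use assms in simp)
  also have "\<dots> \<le> card {c \<in> S. c \<noteq> None \<and> spider_parent c \<in> S}"
    by (rule card_image_le) (use assms in simp)
  finally show ?thesis .
qed

lemma card_spider_edges_within_center:
  assumes "finite S" "None \<in> S"
  shows "card {e \<in> spider_E as. e \<subseteq> S} < card S"
proof -
  have "card {c \<in> S. c \<noteq> None \<and> spider_parent c \<in> S} < card S"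
    by (rule psubset_card_mono) (use assms in auto)
  then show ?thesis using card_spider_edges_within_le[OF assms(1), of as] by linarith
qed

lemma lowest_leg_vertex:
  assumes "None \<notin> S" "Some (i, k) \<in> S"
  shows "\<exists>m. Some (i, m) \<in> S \<and> spider_parent (Some (i, m)) \<notin> S"
  using assms(2)
proof (induction k)
  case (Suc k)
  show ?case
  proof (cases "leg_vertex i k \<in> S")
    case True
    with assms(1) have "Some (i, k) \<in> S" by (cases k) auto
    then show ?thesis by (rule Suc.IH)
  next
    case False
    with Suc.prems show ?thesis by auto
  qed
qed (use assms(1) in auto)

lemma card_spider_edges_within_off_center:
  assumes "finite S" "S \<noteq> {}" "S \<subseteq> spider_V as" "None \<notin> S"
    and "\<forall>i<length as. as ! i < card S"
  shows "card {e \<in> spider_E as. e \<subseteq> S} + 2 \<le> card S"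
proof -
  obtain i1 k1 where v1: "Some (i1, k1) \<in> S" "i1 < length as"
    using assms(2-4) unfolding spider_V_def by fastforce
  have "\<not> S \<subseteq> leg_vertices as i1"
    using card_mono[of "leg_vertices as i1" S] assms(5) v1(2) by (auto simp: card_leg_vertices)
  then obtain i2 k2 where v2: "Some (i2, k2) \<in> S" "i2 \<noteq> i1"
    using assms(3,4) unfolding spider_V_def leg_vertices_def by fastforce
  obtain m1 m2 where
    m1: "Some (i1, m1) \<in> S" "spider_parent (Some (i1, m1)) \<notin> S" and
    m2: "Some (i2, m2) \<in> S" "spider_parent (Some (i2, m2)) \<notin> S"
    using lowest_leg_vertex[OF assms(4) v1(1)] lowest_leg_vertex[OF assms(4) v2(1)] by blast
  let ?lowest = "{Some (i1, m1), Some (i2, m2)}"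
  have "card {c \<in> S. c \<noteq> None \<and> spider_parent c \<in> S} \<le> card (S - ?lowest)"
    by (rule card_mono) (use assms(1) m1 m2 in auto)
  also have "\<dots> = card S - 2"
    using m1 m2 v2(2) assms(1) by (subst card_Diff_subset) auto
  finally show ?thesis
    using card_spider_edges_within_le[OF assms(1), of as] card_mono[OF assms(1), of ?lowest]
      m1 m2 v2(2)
    by auto
qed

section \<open>Grouping the legs into classes of equal length\<close>

definition equal_sum_classes :: "nat list \<Rightarrow> (nat \<Rightarrow> 'q) \<Rightarrow> 'q set \<Rightarrow> nat \<Rightarrow> bool" where
  "equal_sum_classes as f Q s \<longleftrightarrow> (\<forall>i<length as. f i \<in> Q) \<and>
     (\<forall>q\<in>Q. (\<Sum>i\<in>{i. i < length as \<and> f i = q}. as ! i) = s)"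

lemma equal_sum_classesD:
  assumes "equal_sum_classes as f Q s"
  shows "i < length as \<Longrightarrow> f i \<in> Q"
    and "q \<in> Q \<Longrightarrow> (\<Sum>i\<in>{i. i < length as \<and> f i = q}. as ! i) = s"
  using assms by (simp_all add: equal_sum_classes_def)

lemma card_UN_class_leg_edges:
  "card (\<Union>i\<in>{i. i < length as \<and> f i = q}. leg_edges as i)
     = (\<Sum>i\<in>{i. i < length as \<and> f i = q}. as ! i)"
  by (subst card_UN_disjoint) (auto simp: leg_edges_disjoint card_leg_edges)

lemma card_UN_class_leg_vertices:
  "card (\<Union>i\<in>{i. i < length as \<and> f i = q}. leg_vertices as i)
     = (\<Sum>i\<in>{i. i < length as \<and> f i = q}. as ! i)"
  by (subst card_UN_disjoint) (auto simp: leg_vertices_disjoint card_leg_vertices)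

lemma card_eq_3_of_sum_bounds:
  fixes x :: "'a \<Rightarrow> nat"
  assumes "finite I" "(\<Sum>i\<in>I. x i) = s" "s > 0" "\<forall>i\<in>I. s < 4 * x i \<and> 2 * x i < s"
  shows "card I = 3"
proof -
  have "I \<noteq> {}" using assms(2,3) by auto
  have "card I * s = (\<Sum>i\<in>I. s)" by simp
  also have "\<dots> < (\<Sum>i\<in>I. 4 * x i)"
    using assms(1,4) \<open>I \<noteq> {}\<close> by (intro sum_strict_mono) auto
  also have "\<dots> = 4 * s" using assms(2) by (simp add: sum_distrib_left[symmetric])
  finally have "card I < 4" using assms(3) by simp
  have "2 * s = (\<Sum>i\<in>I. 2 * x i)" using assms(2) by (simp add: sum_distrib_left[symmetric])
  also have "\<dots> < (\<Sum>i\<in>I. s)"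
    using assms(1,4) \<open>I \<noteq> {}\<close> by (intro sum_strict_mono) auto
  also have "\<dots> = card I * s" by simp
  finally have "2 < card I" using assms(3) by (metis mult_less_cancel2)
  with \<open>card I < 4\<close> show ?thesis by simp
qed

lemma mset_set_eq_plusD:
  assumes "finite A" "mset_set A = M1 + M2"
  shows "set_mset M1 \<subseteq> A \<and> M1 = mset_set (set_mset M1) \<and> M2 = mset_set (A - set_mset M1)"
proof (intro conjI)
  show sub: "set_mset M1 \<subseteq> A"
    using assms by (metis Un_iff elem_mset_set set_mset_union subsetI)
  have le: "count M1 x + count M2 x \<le> 1" for x
    using assms(2) count_mset_set'[of A x] by (metis count_union le_less order_refl zero_less_one)
  have "count M1 x = count (mset_set (set_mset M1)) x" for x
  proof (cases "x \<in># M1")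
    case True
    then have "0 < count M1 x" by simp
    with le[of x] have "count M1 x = 1" by linarith
    with True show ?thesis by simp
  qed (simp add: not_in_iff)
  then show M1: "M1 = mset_set (set_mset M1)"
    by (rule multiset_eqI)
  have "M2 = mset_set A - mset_set (set_mset M1)"
    using assms(2) M1 by (metis add_diff_cancel_left')
  then show "M2 = mset_set (A - set_mset M1)"
    using assms(1) sub by (simp add: mset_set_Diff)
qed

lemma image_mset_mset_set_eq_sum_listD:
  "finite A \<Longrightarrow> image_mset h (mset_set A) = sum_list Bs \<Longrightarrow>
   \<exists>g. (\<forall>a\<in>A. g a < length Bs) \<and>
       (\<forall>j<length Bs. image_mset h (mset_set {a\<in>A. g a = j}) = Bs ! j)"
proof (induction Bs arbitrary: A)
  case Nil
  then have "mset_set A = {#}" by simp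
  with Nil.prems(1) have "A = {}" by (simp add: mset_set_empty_iff)
  then show ?case by simp
next
  case (Cons B Bs)
  from Cons.prems(2) obtain M1 M2 where
    M: "mset_set A = M1 + M2" "B = image_mset h M1" "sum_list Bs = image_mset h M2"
    using image_mset_eq_plusD[of h "mset_set A" B "sum_list Bs"] by auto
  define A1 where "A1 = set_mset M1"
  from mset_set_eq_plusD[OF Cons.prems(1) M(1)]
  have "A1 \<subseteq> A" and M1: "M1 = mset_set A1" and M2: "M2 = mset_set (A - A1)"
    by (auto simp: A1_def)
  from Cons.IH[of "A - A1"] Cons.prems(1) M(3) M2 obtain g where
    g: "\<forall>a\<in>A - A1. g a < length Bs"
       "\<forall>j<length Bs. image_mset h (mset_set {a\<in>A - A1. g a = j}) = Bs ! j" by auto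
  define g' where "g' a = (if a \<in> A1 then 0 else Suc (g a))" for a
  show ?case
  proof (intro exI[of _ g'] conjI ballI allI impI)
    fix a assume "a \<in> A"
    then show "g' a < length (B # Bs)" using g(1) by (auto simp: g'_def)
  next
    fix j assume j: "j < length (B # Bs)"
    show "image_mset h (mset_set {a \<in> A. g' a = j}) = (B # Bs) ! j"
    proof (cases j)
      case 0
      then have "{a \<in> A. g' a = j} = A1" using \<open>A1 \<subseteq> A\<close> by (auto simp: g'_def)
      then show ?thesis using 0 M(2) M1 by simp
    next
      case (Suc j')
      then have "{a \<in> A. g' a = j} = {a \<in> A - A1. g a = j'}" by (auto simp: g'_def)
      then show ?thesis using Suc g(2) j by simp
    qed
  qed
qed

lemma mset_eq_image_mset_nth: "mset as = image_mset (nth as) (mset_set {..<length as})"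
proof -
  have "mset as = mset (map (nth as) [0..<length as])" by (simp add: map_nth)
  then show ?thesis by (simp add: lessThan_atLeast0)
qed

lemma equal_sum_classes_of_mset_partition:
  assumes "size P = p" "sum_mset P = mset as" "\<forall>B\<in>#P. sum_mset B = s"
  shows "\<exists>g. equal_sum_classes as g {..<p} s"
proof -
  obtain Bs where Bs: "mset Bs = P" using ex_mset by blast
  have "image_mset (nth as) (mset_set {..<length as}) = sum_list Bs"
    using assms(2) Bs by (metis mset_eq_image_mset_nth sum_mset_sum_list)
  from image_mset_mset_set_eq_sum_listD[OF _ this] obtain g where
    g: "\<forall>i\<in>{..<length as}. g i < length Bs"
       "\<forall>j<length Bs. image_mset (nth as) (mset_set {i\<in>{..<length as}. g i = j}) = Bs ! j"
    by auto
  have len: "length Bs = p" using Bs assms(1) by (metis size_mset)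
  have "(\<Sum>i\<in>{i. i < length as \<and> g i = j}. as ! i) = s" if j: "j < p" for j
  proof -
    have "(\<Sum>i\<in>{i. i < length as \<and> g i = j}. as ! i)
        = sum_mset (image_mset (nth as) (mset_set {i\<in>{..<length as}. g i = j}))"
      by (simp add: sum_unfold_sum_mset)
    also have "\<dots> = sum_mset (Bs ! j)" using g(2) j len by simp
    also have "\<dots> = s" using assms(3) Bs j len by (metis nth_mem set_mset_mset)
    finally show ?thesis .
  qed
  with g(1) len have "equal_sum_classes as g {..<p} s"
    unfolding equal_sum_classes_def by simp
  then show ?thesis by blast
qed

lemma sum_image_mset_fibers:
  assumes "finite Q" "\<forall>a\<in>#M. f a \<in> Q"
  shows "(\<Sum>q\<in>Q. image_mset h (filter_mset (\<lambda>a. f a = q) M)) = image_mset h M"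
  using assms(2)
proof (induction M)
  case (add x M)
  have "(\<Sum>q\<in>Q. image_mset h (filter_mset (\<lambda>a. f a = q) (add_mset x M)))
      = (\<Sum>q\<in>Q. (if f x = q then {#h x#} else {#}) + image_mset h (filter_mset (\<lambda>a. f a = q) M))"
    by (intro sum.cong) auto
  also have "\<dots> = {#h x#} + image_mset h M"
    using add assms(1) by (simp add: sum.distrib)
  finally show ?case by simp
qed simp

lemma mset_partition_of_equal_sum_classes:
  assumes "finite Q" "equal_sum_classes as f Q s" "length as = 3 * p"
    and "\<forall>a\<in>set as. s < 4 * a \<and> 2 * a < s" "s > 0"
  shows "\<exists>P :: nat multiset multiset. size P = p \<and> sum_mset P = mset as \<and>
           (\<forall>B\<in>#P. size B = 3 \<and> sum_mset B = s)"
proof -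
  let ?I = "\<lambda>q. {i. i < length as \<and> f i = q}"
  have card_I: "card (?I q) = 3" if "q \<in> Q" for q
    using equal_sum_classesD(2)[OF assms(2) that] assms(4,5)
    by (intro card_eq_3_of_sum_bounds[where x = "nth as"]) auto
  have "{..<length as} = (\<Union>q\<in>Q. ?I q)"
    using equal_sum_classesD(1)[OF assms(2)] by auto
  moreover have "card (\<Union>q\<in>Q. ?I q) = (\<Sum>q\<in>Q. card (?I q))"
    using assms(1) by (rule card_UN_disjoint) auto
  ultimately have "card {..<length as} = (\<Sum>q\<in>Q. card (?I q))" by simp
  with card_I assms(3) have card_Q: "card Q = p" by simp
  define P where "P = image_mset (\<lambda>q. image_mset (nth as) (mset_set (?I q))) (mset_set Q)"
  have "sum_mset P = (\<Sum>q\<in>Q. image_mset (nth as)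
      (filter_mset (\<lambda>i. f i = q) (mset_set {..<length as})))"
    by (simp add: P_def sum_unfold_sum_mset)
  also have "\<dots> = mset as"
    using equal_sum_classesD(1)[OF assms(2)]
    by (subst sum_image_mset_fibers) (simp_all add: assms(1) mset_eq_image_mset_nth)
  finally have "sum_mset P = mset as" .
  moreover have "size B = 3 \<and> sum_mset B = s" if "B \<in># P" for B
    using that card_I equal_sum_classesD(2)[OF assms(2)] assms(1)
    by (auto simp: P_def sum_unfold_sum_mset)
  ultimately show ?thesis using card_Q by (intro exI[of _ P]) (simp add: P_def)
qed

section \<open>Decompositions of the spider into subtrees\<close>

lemma center_reaches_leg_vertex:
  assumes "leg_edges as i \<subseteq> F" "k \<le> as ! i"
  shows "(None, leg_vertex i k) \<in> (adj_rel F)\<^sup>*"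
  using assms(2)
proof (induction k)
  case (Suc k)
  have "{leg_vertex i k, leg_vertex i (Suc k)} \<in> F"
    using assms(1) Suc.prems unfolding leg_edges_def by auto
  then have "(leg_vertex i k, leg_vertex i (Suc k)) \<in> adj_rel F"
    by (simp add: adj_rel_def leg_vertex_def)
  with Suc show ?case by (meson Suc_leD rtrancl.rtrancl_into_rtrancl)
qed simp

lemma is_tree_edges_UN_leg_edges:
  assumes "I \<subseteq> {..<length as}" "(\<Union>i\<in>I. leg_edges as i) \<noteq> {}"
  shows "is_tree_edges (\<Union>i\<in>I. leg_edges as i)"
proof -
  let ?F = "\<Union>i\<in>I. leg_edges as i"
  have F_sub: "?F \<subseteq> spider_E as"
    using assms(1) by (auto simp: spider_E_eq_UN_leg_edges)
  have finite_F: "finite ?F"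
    using F_sub by (rule finite_subset) simp
  have reach: "(None, u) \<in> (adj_rel ?F)\<^sup>*" if "u \<in> \<Union>?F" for u
  proof -
    from that obtain i k where ik: "i \<in> I" "k < as ! i"
      "u \<in> {leg_vertex i k, leg_vertex i (Suc k)}"
      unfolding leg_edges_def by auto
    have "leg_edges as i \<subseteq> ?F" using ik(1) by auto
    from center_reaches_leg_vertex[OF this, of k] center_reaches_leg_vertex[OF this, of "Suc k"]
    show ?thesis using ik by auto
  qed
  have "connected_graph (\<Union>?F) ?F"
    unfolding connected_graph_def is_edge_set_def
  proof (intro conjI ballI)
    fix e assume "e \<in> ?F"
    then show "e \<subseteq> \<Union>?F" "card e = 2" by (auto intro: card_leg_edge)
  next
    fix u v assume "u \<in> \<Union>?F" "v \<in> \<Union>?F"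
    then show "(u, v) \<in> (adj_rel ?F)\<^sup>*"
      using reach rtrancl_adj_rel_sym rtrancl_trans by metis
  qed
  moreover have "(x, y) \<notin> (adj_rel (?F - {{x, y}}))\<^sup>*" if "{x, y} \<in> ?F" "x \<noteq> y" for x y
    using spider_acyclic[of x y as] that F_sub
      rtrancl_adj_rel_mono[of "?F - {{x, y}}" "spider_E as - {{x, y}}"]
    by blast
  ultimately show ?thesis
    unfolding is_tree_edges_def using assms(2) finite_F by blast
qed

lemma tree_decomposition_of_equal_sum_classes:
  assumes "equal_sum_classes as g {..<p} s" "s > 0"
  shows "\<exists>F :: nat \<Rightarrow> (nat \<times> nat) option set set.
           (\<Union>j<p. F j) = spider_E as \<and>
           (\<forall>j<p. \<forall>k<p. j \<noteq> k \<longrightarrow> F j \<inter> F k = {}) \<and>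
           (\<forall>j<p. F j \<subseteq> spider_E as \<and> is_tree_edges (F j) \<and> card (F j) = s)"
proof -
  define F where "F j = (\<Union>i\<in>{i. i < length as \<and> g i = j}. leg_edges as i)" for j
  have card_F: "card (F j) = s" if "j < p" for j
    using equal_sum_classesD(2)[OF assms(1)] that unfolding F_def card_UN_class_leg_edges by simp
  have F_sub: "F j \<subseteq> spider_E as" for j
    unfolding F_def spider_E_eq_UN_leg_edges by blast
  have "spider_E as \<subseteq> (\<Union>j<p. F j)"
  proof
    fix e assume "e \<in> spider_E as"
    then obtain i where "i < length as" "e \<in> leg_edges as i"
      unfolding spider_E_eq_UN_leg_edges by blast
    with equal_sum_classesD(1)[OF assms(1)] show "e \<in> (\<Union>j<p. F j)"
      unfolding F_def by blast
  qed
  with F_sub have "(\<Union>j<p. F j) = spider_E as" by blast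
  moreover have "F j \<inter> F k = {}" if "j \<noteq> k" for j k
    unfolding F_def by (rule UN_leg_edges_disjoint) (use that in blast)
  moreover have "is_tree_edges (F j)" if "j < p" for j
  proof -
    have "F j \<noteq> {}" using card_F[OF that] assms(2) by auto
    then show ?thesis unfolding F_def by (intro is_tree_edges_UN_leg_edges) auto
  qed
  ultimately show ?thesis
    using F_sub card_F by (intro exI[of _ F]) simp
qed

lemma connected_subgraph_leaves_leg_via_center:
  assumes "connected_graph (\<Union>F) F" "F \<subseteq> spider_E as"
    and "v \<in> \<Union>F" "v \<in> leg_vertices as i" "u \<in> \<Union>F" "u \<notin> leg_vertices as i"
  shows "{None, Some (i, 1)} \<in> F"
proof -
  have "(v, u) \<in> (adj_rel F)\<^sup>*"
    using assms(1,3,5) unfolding connected_graph_def by blast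
  from adj_rel_path_crosses[OF this] assms(4,6) obtain a b
    where ab: "{a, b} \<in> F" "a \<in> leg_vertices as i" "b \<notin> leg_vertices as i"
    by blast
  with assms(2) have "a = Some (i, 1) \<and> b = None" by (intro leg_vertex_neighbour) auto
  with ab(1) show ?thesis by (simp add: insert_commute)
qed

lemma connected_subgraph_off_center_within_leg:
  assumes "connected_graph (\<Union>F) F" "F \<subseteq> spider_E as" "None \<notin> \<Union>F"
    and "e \<in> F" "e \<in> leg_edges as i"
  shows "F \<subseteq> leg_edges as i"
proof
  obtain v where v: "v \<in> e" "v \<in> leg_vertices as i"
    using leg_edge_meets_leg_vertices[OF assms(5)] by blast
  have within: "\<Union>F \<subseteq> leg_vertices as i"
    using connected_subgraph_leaves_leg_via_center[OF assms(1,2) _ v(2)] v(1) assms(3,4) by blast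
  fix e' assume "e' \<in> F"
  with assms(2) obtain i' where i': "e' \<in> leg_edges as i'"
    unfolding spider_E_eq_UN_leg_edges by blast
  then obtain v' where "v' \<in> e'" "v' \<in> leg_vertices as i'"
    using leg_edge_meets_leg_vertices by blast
  with within \<open>e' \<in> F\<close> have "i' = i" using leg_vertices_disjoint by blast
  with i' show "e' \<in> leg_edges as i" by simp
qed

lemma center_in_connected_subgraph:
  assumes "connected_graph (\<Union>F) F" "F \<subseteq> spider_E as" "F \<noteq> {}"
    and "\<forall>i<length as. as ! i < card F"
  shows "None \<in> \<Union>F"
proof (rule ccontr)
  assume "None \<notin> \<Union>F"
  obtain e where e: "e \<in> F" using assms(3) by blast
  with assms(2) obtain i where i: "i < length as" "e \<in> leg_edges as i"
    unfolding spider_E_eq_UN_leg_edges by blast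
  have "F \<subseteq> leg_edges as i"
    by (rule connected_subgraph_off_center_within_leg[OF assms(1,2) \<open>None \<notin> _\<close> e i(2)])
  then have "card F \<le> as ! i"
    using card_mono[of "leg_edges as i" F] by (simp add: card_leg_edges)
  with assms(4) i(1) show False by auto
qed

lemma connected_subgraph_through_center_contains_first_leg_edge:
  assumes "connected_graph (\<Union>F) F" "F \<subseteq> spider_E as" "None \<in> \<Union>F"
    and "e \<in> F" "e \<in> leg_edges as i"
  shows "{None, Some (i, 1)} \<in> F"
proof -
  obtain v where "v \<in> e" "v \<in> leg_vertices as i"
    using leg_edge_meets_leg_vertices[OF assms(5)] by blast
  with assms show ?thesis
    by (intro connected_subgraph_leaves_leg_via_center[of F as v i None]) auto
qed

lemma equal_sum_classes_of_tree_decomposition: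
  assumes cover: "(\<Union>j<p. F j) = spider_E as"
    and disjoint: "\<forall>j<p. \<forall>k<p. j \<noteq> k \<longrightarrow> F j \<inter> F k = {}"
    and trees: "\<forall>j<p. F j \<subseteq> spider_E as \<and> is_tree_edges (F j) \<and> card (F j) = s"
    and legs: "\<forall>i<length as. 0 < as ! i \<and> as ! i < s"
  shows "\<exists>f. equal_sum_classes as f {..<p} s"
proof -
  have connected: "connected_graph (\<Union>(F j)) (F j)" and nonempty: "F j \<noteq> {}" if "j < p" for j
    using trees that unfolding is_tree_edges_def by blast+
  have center: "None \<in> \<Union>(F j)" if "j < p" for j
    using center_in_connected_subgraph[OF connected[OF that] _ nonempty[OF that]] trees legs that
    by auto
  have "{None, Some (i, 1)} \<in> spider_E as" if "i < length as" for i
    using legs that unfolding spider_E_def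
    by (intro UnI1 CollectI exI[of _ i]) (simp add: Suc_le_eq)
  then have "\<exists>j<p. {None, Some (i, 1)} \<in> F j" if "i < length as" for i
    using that cover by blast
  then obtain f where f: "f i < p" "{None, Some (i, 1)} \<in> F (f i)" if "i < length as" for i
    by metis
  have f_unique: "j = f i" if "i < length as" "j < p" "{None, Some (i, 1)} \<in> F j" for i j
    using disjoint f that by blast
  have leg_in_F: "leg_edges as i \<subseteq> F (f i)" if i: "i < length as" for i
  proof
    fix e assume e: "e \<in> leg_edges as i"
    with i cover obtain j where j: "j < p" "e \<in> F j"
      unfolding spider_E_eq_UN_leg_edges by blast
    with e trees have "{None, Some (i, 1)} \<in> F j"
      by (intro connected_subgraph_through_center_contains_first_leg_edge
          [OF connected[OF j(1)] _ center[OF j(1)]]) auto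
    with i j show "e \<in> F (f i)" using f_unique by blast
  qed
  have F_eq: "F j = (\<Union>i\<in>{i. i < length as \<and> f i = j}. leg_edges as i)" if j: "j < p" for j
  proof
    show "F j \<subseteq> (\<Union>i\<in>{i. i < length as \<and> f i = j}. leg_edges as i)"
    proof
      fix e assume e: "e \<in> F j"
      with trees j obtain i where i: "i < length as" "e \<in> leg_edges as i"
        unfolding spider_E_eq_UN_leg_edges by blast
      with leg_in_F have "e \<in> F (f i)" by blast
      with e j i(1) disjoint f(1) have "f i = j" by blast
      with i show "e \<in> (\<Union>i\<in>{i. i < length as \<and> f i = j}. leg_edges as i)" by blast
    qed
  qed (use leg_in_F in blast)
  have "(\<Sum>i\<in>{i. i < length as \<and> f i = j}. as ! i) = s" if "j < p" for j
  proof -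
    have "(\<Sum>i\<in>{i. i < length as \<and> f i = j}. as ! i) = card (F j)"
      by (simp only: F_eq[OF that] card_UN_class_leg_edges)
    with trees that show ?thesis by simp
  qed
  with f(1) have "equal_sum_classes as f {..<p} s"
    unfolding equal_sum_classes_def by simp
  then show ?thesis by blast
qed

section \<open>Completions of the spider from classes\<close>

lemma complete_edges_legs_inter_spider_E:
  "complete_edges (insert None (\<Union>i\<in>I. leg_vertices as i)) \<inter> spider_E as
     = (\<Union>i\<in>I \<inter> {..<length as}. leg_edges as i)"
proof
  show "complete_edges (insert None (\<Union>i\<in>I. leg_vertices as i)) \<inter> spider_E as
      \<subseteq> (\<Union>i\<in>I \<inter> {..<length as}. leg_edges as i)"
  proof
    fix e assume e: "e \<in> complete_edges (insert None (\<Union>i\<in>I. leg_vertices as i)) \<inter> spider_E as"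
    then obtain i k where ik: "i < length as" "k < as ! i"
      "e = {leg_vertex i k, leg_vertex i (Suc k)}"
      by (auto elim: spider_E_cases)
    with e have "Some (i, Suc k) \<in> (\<Union>i\<in>I. leg_vertices as i)"
      by (auto simp: complete_edges_def)
    then have "i \<in> I" by (auto simp: leg_vertices_def)
    with ik show "e \<in> (\<Union>i\<in>I \<inter> {..<length as}. leg_edges as i)"
      unfolding leg_edges_def by auto
  qed
  show "(\<Union>i\<in>I \<inter> {..<length as}. leg_edges as i)
      \<subseteq> complete_edges (insert None (\<Union>i\<in>I. leg_vertices as i)) \<inter> spider_E as"
    using leg_edge_subset card_leg_edge
    by (fastforce simp: complete_edges_def spider_E_eq_UN_leg_edges)
qed

lemma card_insert_None_UN_leg_vertices:
  "finite I \<Longrightarrow> card (insert None (\<Union>i\<in>I. leg_vertices as i)) = Suc (\<Sum>i\<in>I. as ! i)"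
  by (subst card_insert_disjoint)
    (auto simp: card_UN_disjoint leg_vertices_disjoint card_leg_vertices)

lemma card_complete_edges_legs_diff_spider_E:
  assumes "I \<subseteq> {..<length as}" "(\<Sum>i\<in>I. as ! i) = s"
  shows "card (complete_edges (insert None (\<Union>i\<in>I. leg_vertices as i)) - spider_E as)
    = s * (s - 1) div 2"
proof -
  let ?K = "insert None (\<Union>i\<in>I. leg_vertices as i)"
  have "finite I" using assms(1) finite_subset by blast
  have card_K: "card ?K = Suc s"
    using card_insert_None_UN_leg_vertices[OF \<open>finite I\<close>] assms(2) by simp
  have "card (complete_edges ?K \<inter> spider_E as) = s"
    unfolding complete_edges_legs_inter_spider_E using assms \<open>finite I\<close>
    by (subst card_UN_disjoint) (auto simp: leg_edges_disjoint card_leg_edges Int_absorb2)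
  then have "card (complete_edges ?K - spider_E as) = (Suc s choose 2) - s"
    using card_K \<open>finite I\<close>
    by (simp add: card_Diff_subset_Int finite_complete_edges card_complete_edges)
  also have "\<dots> = s * (s - 1) div 2"
    by (cases s) (simp_all add: choose_two)
  finally show ?thesis .
qed

lemma card_UN_complete_edges_classes_diff_spider_E:
  assumes "equal_sum_classes as g {..<p} s"
  shows "card (\<Union>j<p. complete_edges (insert None (\<Union>i\<in>{i. i < length as \<and> g i = j}.
      leg_vertices as i)) - spider_E as) = p * s * (s - 1) div 2"
proof -
  let ?K = "\<lambda>j. insert None (\<Union>i\<in>{i. i < length as \<and> g i = j}. leg_vertices as i)"
  have disjoint: "complete_edges (?K j) \<inter> complete_edges (?K j') = {}" if "j \<noteq> j'" for j j'
  proof (rule complete_edges_disjoint)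
    have "{i. i < length as \<and> g i = j} \<inter> {i. i < length as \<and> g i = j'} = {}"
      using that by blast
    from UN_leg_vertices_disjoint[OF this, of as] show "?K j \<inter> ?K j' \<subseteq> {None}" by blast
  qed
  have "card (\<Union>j<p. complete_edges (?K j) - spider_E as)
      = (\<Sum>j<p. card (complete_edges (?K j) - spider_E as))"
  proof (rule card_UN_disjoint)
    show "\<forall>j\<in>{..<p}. \<forall>j'\<in>{..<p}. j \<noteq> j' \<longrightarrow>
        (complete_edges (?K j) - spider_E as) \<inter> (complete_edges (?K j') - spider_E as) = {}"
      using disjoint by blast
  qed (auto intro: finite_complete_edges)
  also have "\<dots> = (\<Sum>j<p. s * (s - 1) div 2)"
    using equal_sum_classesD(2)[OF assms]
    by (intro sum.cong refl card_complete_edges_legs_diff_spider_E) auto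
  also have "\<dots> = p * s * (s - 1) div 2"
  proof -
    have "even (s * (s - 1))" by (cases s) auto
    then show ?thesis by (simp add: div_mult_swap mult.assoc)
  qed
  finally show ?thesis .
qed

lemma completion_of_equal_sum_classes:
  assumes "equal_sum_classes as g {..<p} s" "p > 0"
  shows "\<exists>E'. is_completion_set (s + 1) (spider_V as) (spider_E as) E' \<and>
           finite E' \<and> card E' = p * s * (s - 1) div 2"
proof -
  let ?I = "\<lambda>j. {i. i < length as \<and> g i = j}"
  define K where "K j = insert None (\<Union>i\<in>?I j. leg_vertices as i)" for j
  define E' where "E' = (\<Union>j<p. complete_edges (K j) - spider_E as)"
  have K_sub: "K j \<subseteq> spider_V as" for j
    unfolding K_def spider_V_eq_insert_UN_leg_vertices by blast
  have finite_K: "finite (K j)" for j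
    by (rule finite_subset[OF K_sub]) simp
  have card_K: "card (K j) = s + 1" if "j < p" for j
    unfolding K_def using equal_sum_classesD(2)[OF assms(1)] that
    by (simp add: card_UN_class_leg_vertices)
  have "spider_E as \<subseteq> (\<Union>j<p. complete_edges (K j))"
  proof
    fix e assume "e \<in> spider_E as"
    then obtain i where i: "i < length as" "e \<in> leg_edges as i"
      unfolding spider_E_eq_UN_leg_edges by blast
    then have "e \<in> complete_edges (K (g i)) \<inter> spider_E as"
      unfolding K_def complete_edges_legs_inter_spider_E by blast
    with equal_sum_classesD(1)[OF assms(1) i(1)] show "e \<in> (\<Union>j<p. complete_edges (K j))"
      by blast
  qed
  then have union: "spider_E as \<union> E' = (\<Union>j<p. complete_edges (K j))"
    unfolding E'_def by blast
  have "spider_V as = (\<Union>j<p. K j)"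
  proof
    show "spider_V as \<subseteq> (\<Union>j<p. K j)"
      using assms equal_sum_classesD(1)[OF assms(1)]
      unfolding spider_V_eq_insert_UN_leg_vertices K_def by blast
  qed (use K_sub in blast)
  then have "has_k1_cover (s + 1) (spider_V as) (spider_E as \<union> E')"
    unfolding union using card_K K_def
    by (intro has_k1_cover_UN_complete_edges) (auto simp: finite_K)
  moreover have "E' \<subseteq> non_edges (spider_V as) (spider_E as)"
  proof
    fix e assume "e \<in> E'"
    then obtain j x y where "e = {x, y}" "x \<noteq> y" "e \<subseteq> K j" "e \<notin> spider_E as"
      unfolding E'_def complete_edges_def by (auto simp: card_2_iff)
    with K_sub[of j] show "e \<in> non_edges (spider_V as) (spider_E as)"
      unfolding non_edges_def by blast
  qed
  moreover have "finite E'"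
    unfolding E'_def by (auto intro: finite_complete_edges finite_K)
  moreover have "card E' = p * s * (s - 1) div 2"
    unfolding E'_def K_def by (rule card_UN_complete_edges_classes_diff_spider_E[OF assms(1)])
  ultimately show ?thesis
    unfolding is_completion_set_def by blast
qed

section \<open>Discharging in rooted graphs with a (k,1)-cover\<close>

locale rooted_k1_cover =
  fixes V :: "'v set" and E :: "'v set set" and k :: nat and r :: 'v
  assumes cover: "has_k1_cover k V E"
    and finite_V: "finite V"
    and root_in_V: "r \<in> V"
begin

definition dist :: "'v \<Rightarrow> nat" where
  "dist v = (LEAST n. (r, v) \<in> adj_rel E ^^ n)"

definition weight :: "'v set \<Rightarrow> 'v \<Rightarrow> nat" where
  "weight e v = (if \<exists>u\<in>e. dist u < dist v then 2 else if \<exists>u\<in>e. dist v < dist u then 0 else 1)"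

definition charge :: "'v \<Rightarrow> nat" where
  "charge v = (\<Sum>e\<in>{e \<in> E. v \<in> e}. weight e v)"

definition back_nbhd :: "'v \<Rightarrow> 'v set" where
  "back_nbhd v = insert v {x. {x, v} \<in> E \<and> dist x \<le> dist v}"

lemma edge_subset_V: "e \<in> E \<Longrightarrow> e \<subseteq> V"
  and card_edge: "e \<in> E \<Longrightarrow> card e = 2"
  using cover by (auto simp: has_k1_cover_def connected_graph_def is_edge_set_def)

lemma finite_E: "finite E"
  using edge_subset_V finite_V by (meson Pow_iff finite_Pow_iff finite_subset subsetI)

lemma edge_doubleton: "e \<in> E \<Longrightarrow> \<exists>x y. e = {x, y} \<and> x \<noteq> y"
  using card_edge by (meson card_2_iff)

lemma edge_ends_neq: "{x, y} \<in> E \<Longrightarrow> x \<noteq> y"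
  using card_edge by fastforce

lemma adj_rel_iff: "(x, y) \<in> adj_rel E \<longleftrightarrow> {x, y} \<in> E"
  using edge_ends_neq by (auto simp: adj_rel_def)

lemma clique_through_edge:
  "e \<in> E \<Longrightarrow> \<exists>C. C \<subseteq> V \<and> finite C \<and> card C = k \<and> e \<subseteq> C \<and> is_clique E C"
  using cover by (simp add: has_k1_cover_def)

lemma root_reaches_at_dist: "v \<in> V \<Longrightarrow> (r, v) \<in> adj_rel E ^^ dist v"
proof -
  assume "v \<in> V"
  with cover root_in_V have "(r, v) \<in> (adj_rel E)\<^sup>*"
    by (simp add: has_k1_cover_def connected_graph_def)
  then obtain n where "(r, v) \<in> adj_rel E ^^ n" using rtrancl_power by blast
  then show ?thesis unfolding dist_def by (rule LeastI)
qed

lemma dist_le: "(r, v) \<in> adj_rel E ^^ n \<Longrightarrow> dist v \<le> n"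
  unfolding dist_def by (rule Least_le)

lemma dist_root [simp]: "dist r = 0"
  using dist_le[of r 0] by simp

lemma dist_eq_0_iff: "v \<in> V \<Longrightarrow> dist v = 0 \<longleftrightarrow> v = r"
  using root_reaches_at_dist by fastforce

lemma dist_edge_le: "{u, v} \<in> E \<Longrightarrow> dist v \<le> dist u + 1"
proof -
  assume e: "{u, v} \<in> E"
  then have "u \<in> V" using edge_subset_V by blast
  with e have "(r, v) \<in> adj_rel E ^^ Suc (dist u)"
    using root_reaches_at_dist adj_rel_iff by auto
  then show ?thesis using dist_le by fastforce
qed

lemma exists_parent:
  assumes "v \<in> V" "v \<noteq> r"
  obtains u where "{u, v} \<in> E" "dist u + 1 = dist v"
proof -
  obtain n where n: "dist v = Suc n" using assms dist_eq_0_iff by (cases "dist v") auto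
  with root_reaches_at_dist[OF assms(1)] obtain u where
    u: "(r, u) \<in> adj_rel E ^^ n" "(u, v) \<in> adj_rel E"
    by (auto elim: relpow_Suc_E)
  then have "{u, v} \<in> E" by (simp add: adj_rel_iff)
  with n dist_le[OF u(1)] dist_edge_le[of u v] have "dist u + 1 = dist v" by simp
  with \<open>{u, v} \<in> E\<close> show thesis by (rule that)
qed

lemma parent_clique:
  assumes "v \<in> V" "v \<noteq> r"
  obtains u C where "{u, v} \<subseteq> C" "dist u < dist v" "C \<subseteq> V" "finite C" "card C = k"
    "is_clique E C" "\<forall>x\<in>C. dist x \<le> dist v"
proof -
  obtain u where u: "{u, v} \<in> E" "dist u + 1 = dist v"
    using exists_parent[OF assms] by blast
  then obtain C where C: "C \<subseteq> V" "finite C" "card C = k" "{u, v} \<subseteq> C" "is_clique E C"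
    using clique_through_edge by blast
  have "dist x \<le> dist v" if "x \<in> C" for x
  proof (cases "x = u")
    case False
    with C(4,5) that have "{u, x} \<in> E" by (auto simp: is_clique_def)
    with u(2) show ?thesis using dist_edge_le by fastforce
  qed (use u(2) in simp)
  with u C show thesis by (intro that[of u C]) auto
qed

lemma sum_charge: "(\<Sum>v\<in>V. charge v) = 2 * card E"
proof -
  have "(\<Sum>v\<in>V. charge v) = (\<Sum>v\<in>V. \<Sum>e\<in>E. if v \<in> e then weight e v else 0)"
    unfolding charge_def using finite_E by (simp add: sum.inter_filter)
  also have "\<dots> = (\<Sum>e\<in>E. \<Sum>v\<in>V. if v \<in> e then weight e v else 0)"
    by (rule sum.swap)
  also have "\<dots> = (\<Sum>e\<in>E. 2)"
  proof (rule sum.cong[OF refl])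
    fix e assume e: "e \<in> E"
    then obtain x y where xy: "e = {x, y}" "x \<noteq> y" using edge_doubleton by blast
    have "(\<Sum>v\<in>V. if v \<in> e then weight e v else 0) = (\<Sum>v\<in>e. weight e v)"
      using edge_subset_V[OF e] finite_V by (simp add: sum.inter_filter[symmetric] Int_absorb1
          flip: Int_def)
    also have "\<dots> = 2" using xy by (auto simp: weight_def)
    finally show "(\<Sum>v\<in>V. if v \<in> e then weight e v else 0) = 2" .
  qed
  finally show ?thesis by simp
qed

lemma weight_edge_to_lower:
  "x \<noteq> v \<Longrightarrow> dist x \<le> dist v \<Longrightarrow> weight {x, v} v = (if dist x < dist v then 2 else 1)"
  by (auto simp: weight_def)

lemma charge_split_clique:
  assumes "v \<in> C" "finite C" "is_clique E C" "\<forall>x\<in>C. dist x \<le> dist v"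
  defines "star \<equiv> (\<lambda>x. {x, v}) ` (C - {v})"
  shows "charge v = (card C - 1) + card {x \<in> C. dist x < dist v}
                    + (\<Sum>e\<in>{e \<in> E. v \<in> e} - star. weight e v)"
proof -
  have star_sub: "star \<subseteq> {e \<in> E. v \<in> e}"
    using assms(1,3) unfolding star_def is_clique_def by auto
  have "inj_on (\<lambda>x. {x, v}) (C - {v})"
    by (auto simp: inj_on_def doubleton_eq_iff)
  then have "(\<Sum>e\<in>star. weight e v) = (\<Sum>x\<in>C - {v}. weight {x, v} v)"
    unfolding star_def by (rule sum.reindex_cong) simp_all
  also have "\<dots> = (\<Sum>x\<in>C - {v}. 1 + (if dist x < dist v then 1 else 0))"
    using assms(4) by (intro sum.cong) (auto simp: weight_edge_to_lower)
  also have "\<dots> = card (C - {v}) + (\<Sum>x\<in>C - {v}. if dist x < dist v then 1 else 0)"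
    by (simp only: sum.distrib card_eq_sum)
  also have "(\<Sum>x\<in>C - {v}. if dist x < dist v then 1 else 0) = card {x \<in> C - {v}. dist x < dist v}"
    using assms(2) by (simp add: sum.inter_filter[symmetric])
  also have "{x \<in> C - {v}. dist x < dist v} = {x \<in> C. dist x < dist v}" by auto
  finally have "(\<Sum>e\<in>star. weight e v) = (card C - 1) + card {x \<in> C. dist x < dist v}"
    using assms(1,2) by simp
  moreover have "charge v = (\<Sum>e\<in>{e \<in> E. v \<in> e} - star. weight e v) + (\<Sum>e\<in>star. weight e v)"
    unfolding charge_def using finite_E by (intro sum.subset_diff[OF star_sub]) simp
  ultimately show ?thesis by simp
qed

lemma charge_ge:
  assumes "v \<in> V" "v \<noteq> r"
  shows "k \<le> charge v"
proof -
  obtain u C where C: "{u, v} \<subseteq> C" "dist u < dist v" "C \<subseteq> V" "finite C" "card C = k"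
    "is_clique E C" "\<forall>x\<in>C. dist x \<le> dist v"
    using parent_clique[OF assms] .
  have "0 < card {x \<in> C. dist x < dist v}"
    using C(1,2,4) by (subst card_gt_0_iff) auto
  moreover have "0 < k"
    using C(1,4,5) card_gt_0_iff by blast
  ultimately show ?thesis
    using charge_split_clique[of v C] C by simp
qed

lemma self_in_back_nbhd: "v \<in> back_nbhd v"
  by (simp add: back_nbhd_def)

lemma dist_le_of_in_back_nbhd: "x \<in> back_nbhd v \<Longrightarrow> dist x \<le> dist v"
  by (auto simp: back_nbhd_def)

lemma edge_subset_back_nbhd:
  assumes "e \<in> E"
  shows "\<exists>v\<in>V - {r}. e \<subseteq> back_nbhd v"
proof -
  obtain x y where xy: "e = {x, y}" "x \<noteq> y" using edge_doubleton[OF assms] by blast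
  have lower_end: "\<exists>v\<in>V - {r}. {a, b} \<subseteq> back_nbhd v"
    if ab: "{a, b} \<in> E" "dist a \<le> dist b" for a b
  proof -
    have "b \<in> V" "a \<in> V" using edge_subset_V[OF ab(1)] by auto
    moreover have "b \<noteq> r"
      using ab edge_ends_neq[OF ab(1)] dist_eq_0_iff[OF \<open>a \<in> V\<close>] by auto
    moreover have "{a, b} \<subseteq> back_nbhd b" using ab by (auto simp: back_nbhd_def)
    ultimately show ?thesis by blast
  qed
  show ?thesis
  proof (cases "dist x \<le> dist y")
    case True
    with assms xy lower_end[of x y] show ?thesis by simp
  next
    case False
    with assms xy lower_end[of y x] show ?thesis by (simp add: insert_commute)
  qed
qed

end

locale tight_rooted_k1_cover = rooted_k1_cover +
  assumes tight: "2 * card E = k * (card V - 1)"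
begin

lemma charge_eq:
  assumes "v \<in> V" "v \<noteq> r"
  shows "charge v = k"
proof (rule ccontr)
  assume "charge v \<noteq> k"
  with charge_ge[OF assms] have "k < charge v" by simp
  have "k * (card V - 1) = (\<Sum>x\<in>V - {r}. k)"
    using finite_V root_in_V by simp
  also have "\<dots> < (\<Sum>x\<in>V - {r}. charge x)"
    using finite_V assms \<open>k < charge v\<close> charge_ge by (intro sum_strict_mono_ex1) auto
  also have "\<dots> \<le> (\<Sum>x\<in>V. charge x)"
    using finite_V by (intro sum_mono2) auto
  finally show False using sum_charge tight by simp
qed

lemma back_nbhd_clique:
  assumes "v \<in> V" "v \<noteq> r"
  shows "back_nbhd v \<subseteq> V" "finite (back_nbhd v)" "card (back_nbhd v) = k"
    "is_clique E (back_nbhd v)" "\<exists>u. {x \<in> back_nbhd v. dist x < dist v} = {u}"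
proof -
  obtain u C where C: "{u, v} \<subseteq> C" "dist u < dist v" "C \<subseteq> V" "finite C" "card C = k"
    "is_clique E C" "\<forall>x\<in>C. dist x \<le> dist v"
    using parent_clique[OF assms] .
  let ?star = "(\<lambda>x. {x, v}) ` (C - {v})"
  let ?lower = "{x \<in> C. dist x < dist v}"
  have "u \<in> ?lower" using C(1,2) by simp
  then have "0 < card ?lower" using C(4) by (subst card_gt_0_iff) auto
  moreover have "0 < card C" using C(1,4) card_gt_0_iff by blast
  moreover have "charge v = (card C - 1) + card ?lower + (\<Sum>e\<in>{e \<in> E. v \<in> e} - ?star. weight e v)"
    using C by (intro charge_split_clique) auto
  ultimately have "card ?lower = 1" and rest: "(\<Sum>e\<in>{e \<in> E. v \<in> e} - ?star. weight e v) = 0"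
    using charge_eq[OF assms] C(5) by linarith+
  with \<open>u \<in> ?lower\<close> have lower: "?lower = {u}"
    by (metis card_1_singletonE singletonD)
  have "back_nbhd v = C"
  proof
    show "C \<subseteq> back_nbhd v"
      using C(1,6,7) by (auto simp: back_nbhd_def is_clique_def)
    show "back_nbhd v \<subseteq> C"
    proof
      fix x assume x: "x \<in> back_nbhd v"
      show "x \<in> C"
      proof (rule ccontr)
        assume "x \<notin> C"
        with x C(1) have e: "{x, v} \<in> E" "dist x \<le> dist v" "x \<noteq> v"
          by (auto simp: back_nbhd_def)
        with \<open>x \<notin> C\<close> have "{x, v} \<in> {e \<in> E. v \<in> e} - ?star"
          by (auto simp: doubleton_eq_iff)
        with rest finite_E have "weight {x, v} v = 0" by simp
        with e show False by (simp add: weight_edge_to_lower split: if_splits)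
      qed
    qed
  qed
  with C lower show "back_nbhd v \<subseteq> V" "finite (back_nbhd v)" "card (back_nbhd v) = k"
    "is_clique E (back_nbhd v)" "\<exists>u. {x \<in> back_nbhd v. dist x < dist v} = {u}"
    by auto
qed

lemma back_nbhd_eq:
  assumes "v \<in> V" "v \<noteq> r" "x \<in> back_nbhd v" "dist x = dist v"
  shows "back_nbhd x = back_nbhd v"
proof -
  have "x \<in> V" using assms(3) back_nbhd_clique(1)[OF assms(1,2)] by blast
  moreover have "x \<noteq> r"
    using assms(2,4) dist_eq_0_iff[OF assms(1)] by auto
  moreover have "back_nbhd v \<subseteq> back_nbhd x"
  proof
    fix y assume y: "y \<in> back_nbhd v"
    show "y \<in> back_nbhd x"
    proof (cases "y = x")
      case False
      with y assms(3) back_nbhd_clique(4)[OF assms(1,2)] have "{y, x} \<in> E"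
        by (auto simp: is_clique_def)
      moreover have "dist y \<le> dist x"
        using dist_le_of_in_back_nbhd[OF y] assms(4) by simp
      ultimately show ?thesis by (simp add: back_nbhd_def)
    qed (simp add: self_in_back_nbhd)
  qed
  ultimately have "back_nbhd v = back_nbhd x"
    using back_nbhd_clique(2,3) assms(1,2) by (intro card_subset_eq) auto
  then show ?thesis ..
qed

lemma back_nbhd_fiber:
  assumes "v \<in> V" "v \<noteq> r"
  shows "{x \<in> V - {r}. back_nbhd x = back_nbhd v} = {x \<in> back_nbhd v. dist x = dist v}"
proof
  show "{x \<in> V - {r}. back_nbhd x = back_nbhd v} \<subseteq> {x \<in> back_nbhd v. dist x = dist v}"
  proof
    fix x assume x: "x \<in> {x \<in> V - {r}. back_nbhd x = back_nbhd v}"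
    then have "x \<in> back_nbhd v" "v \<in> back_nbhd x"
      using self_in_back_nbhd[of x] self_in_back_nbhd[of v] by simp_all
    then show "x \<in> {x \<in> back_nbhd v. dist x = dist v}"
      using dist_le_of_in_back_nbhd le_antisym by blast
  qed
  show "{x \<in> back_nbhd v. dist x = dist v} \<subseteq> {x \<in> V - {r}. back_nbhd x = back_nbhd v}"
    using back_nbhd_eq[OF assms] back_nbhd_clique(1)[OF assms] dist_eq_0_iff assms by auto
qed

lemma card_back_nbhd_fiber:
  assumes "v \<in> V" "v \<noteq> r"
  shows "card {x \<in> V - {r}. back_nbhd x = back_nbhd v} = k - 1"
proof -
  obtain u where u: "{x \<in> back_nbhd v. dist x < dist v} = {u}"
    using back_nbhd_clique(5)[OF assms] by blast
  have "{x \<in> back_nbhd v. dist x = dist v} = back_nbhd v - {u}"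
    using u dist_le_of_in_back_nbhd by force
  moreover have "u \<in> back_nbhd v" using u by blast
  ultimately show ?thesis
    using back_nbhd_fiber[OF assms] back_nbhd_clique(2,3)[OF assms] by simp
qed

lemma card_back_nbhds: "card (back_nbhd ` (V - {r})) * (k - 1) = card V - 1"
proof -
  let ?fiber = "\<lambda>K. {x \<in> V - {r}. back_nbhd x = K}"
  have "V - {r} = (\<Union>K\<in>back_nbhd ` (V - {r}). ?fiber K)" by auto
  moreover have "card (\<Union>K\<in>back_nbhd ` (V - {r}). ?fiber K)
      = (\<Sum>K\<in>back_nbhd ` (V - {r}). card (?fiber K))"
    using finite_V by (intro card_UN_disjoint) auto
  ultimately have "card (V - {r}) = (\<Sum>K\<in>back_nbhd ` (V - {r}). card (?fiber K))"
    by simp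
  also have "\<dots> = (\<Sum>K\<in>back_nbhd ` (V - {r}). k - 1)"
    using card_back_nbhd_fiber by (intro sum.cong) auto
  finally show ?thesis using finite_V root_in_V by simp
qed

end

section \<open>Tight completions of the spider\<close>

locale tight_spider_completion =
  fixes as :: "nat list" and s p :: nat and E' :: "(nat \<times> nat) option set set"
  assumes completion: "is_completion_set (s + 1) (spider_V as) (spider_E as) E'"
    and finite_E': "finite E'"
    and card_E': "card E' = p * s * (s - 1) div 2"
    and sum_as: "sum_list as = s * p"
    and legs: "\<forall>i<length as. 0 < as ! i \<and> as ! i < s"
    and s_pos: "s > 0"
begin

lemma card_spider_E_Un_E': "2 * card (spider_E as \<union> E') = (s + 1) * (card (spider_V as) - 1)"
proof -
  have "spider_E as \<inter> E' = {}"
    using completion by (auto simp: is_completion_set_def non_edges_def)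
  then have "card (spider_E as \<union> E') = s * p + p * s * (s - 1) div 2"
    using finite_E' by (simp add: card_Un_disjoint card_spider_E sum_as card_E')
  moreover have "even (p * s * (s - 1))" by (cases s) auto
  ultimately show ?thesis
    using s_pos by (cases s) (auto simp: card_spider_V sum_as algebra_simps)
qed

sublocale tight_rooted_k1_cover "spider_V as" "spider_E as \<union> E'" "s + 1" None
proof
  show "has_k1_cover (s + 1) (spider_V as) (spider_E as \<union> E')"
    using completion by (simp add: is_completion_set_def)
  show "None \<in> spider_V as" by (simp add: spider_V_def)
qed (simp_all add: card_spider_E_Un_E')

lemma card_spider_edges_within_back_nbhd:
  assumes "v \<in> spider_V as" "v \<noteq> None"
  shows "None \<notin> back_nbhd v \<Longrightarrow> card {e \<in> spider_E as. e \<subseteq> back_nbhd v} < s"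
    and "card {e \<in> spider_E as. e \<subseteq> back_nbhd v} \<le> s"
proof -
  note K = back_nbhd_clique[OF assms]
  show off_center: "None \<notin> back_nbhd v \<Longrightarrow> card {e \<in> spider_E as. e \<subseteq> back_nbhd v} < s"
    using K(1-3) legs self_in_back_nbhd[of v]
      card_spider_edges_within_off_center[of "back_nbhd v" as] by fastforce
  show "card {e \<in> spider_E as. e \<subseteq> back_nbhd v} \<le> s"
  proof (cases "None \<in> back_nbhd v")
    case True
    with K(2,3) show ?thesis using card_spider_edges_within_center[of "back_nbhd v" as] by simp
  qed (use off_center in simp)
qed

lemma card_back_nbhd_image: "card (back_nbhd ` (spider_V as - {None})) = p"
  using card_back_nbhds s_pos by (simp add: card_spider_V sum_as)

lemma center_in_back_nbhd:
  assumes "v \<in> spider_V as" "v \<noteq> None"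
  shows "None \<in> back_nbhd v"
proof (rule ccontr)
  assume "None \<notin> back_nbhd v"
  let ?KK = "back_nbhd ` (spider_V as - {None})"
  have "spider_E as \<subseteq> (\<Union>K\<in>?KK. {e \<in> spider_E as. e \<subseteq> K})"
  proof
    fix e assume e: "e \<in> spider_E as"
    then obtain w where "w \<in> spider_V as - {None}" "e \<subseteq> back_nbhd w"
      using edge_subset_back_nbhd[of e] by blast
    with e show "e \<in> (\<Union>K\<in>?KK. {e \<in> spider_E as. e \<subseteq> K})" by blast
  qed
  then have "s * p \<le> card (\<Union>K\<in>?KK. {e \<in> spider_E as. e \<subseteq> K})"
    using card_mono[of "\<Union>K\<in>?KK. {e \<in> spider_E as. e \<subseteq> K}" "spider_E as"]
    by (simp add: card_spider_E sum_as)
  also have "\<dots> \<le> (\<Sum>K\<in>?KK. card {e \<in> spider_E as. e \<subseteq> K})"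
    by (rule card_UN_le) simp
  also have "\<dots> < (\<Sum>K\<in>?KK. s)"
  proof (rule sum_strict_mono_ex1)
    show "\<forall>K\<in>?KK. card {e \<in> spider_E as. e \<subseteq> K} \<le> s"
      using card_spider_edges_within_back_nbhd(2) by blast
    show "\<exists>K\<in>?KK. card {e \<in> spider_E as. e \<subseteq> K} < s"
      using assms card_spider_edges_within_back_nbhd(1)[OF assms \<open>None \<notin> back_nbhd v\<close>]
      by blast
  qed simp
  also have "\<dots> = s * p" using card_back_nbhd_image by simp
  finally show False by simp
qed

lemma dist_eq_1:
  assumes "v \<in> spider_V as" "v \<noteq> None"
  shows "dist v = 1"
proof -
  from center_in_back_nbhd[OF assms] assms(2) have "{None, v} \<in> spider_E as \<union> E'"
    by (auto simp: back_nbhd_def)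
  then have "dist v \<le> 1" using dist_edge_le by fastforce
  with assms dist_eq_0_iff show ?thesis by fastforce
qed

lemma back_nbhd_along_leg:
  assumes "i < length as" "Suc j \<le> as ! i"
  shows "back_nbhd (Some (i, Suc j)) = back_nbhd (Some (i, 1))"
  using assms(2)
proof (induction j)
  case (Suc j)
  let ?v = "Some (i, Suc j)" and ?w = "Some (i, Suc (Suc j))"
  have "{?v, ?w} \<in> spider_E as"
    using assms(1) Suc.prems unfolding spider_E_def by auto
  moreover have V: "?v \<in> spider_V as" "?w \<in> spider_V as"
    using assms(1) Suc.prems by (auto simp: spider_V_def)
  ultimately have "?w \<in> back_nbhd ?v"
    using dist_eq_1 by (auto simp: back_nbhd_def insert_commute)
  then have "back_nbhd ?w = back_nbhd ?v"
    using back_nbhd_eq[of ?v ?w] V dist_eq_1 by simp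
  with Suc show ?case by simp
qed simp

lemma equal_sum_classes_of_completion:
  "equal_sum_classes as (\<lambda>i. back_nbhd (Some (i, 1))) (back_nbhd ` (spider_V as - {None})) s"
proof -
  let ?f = "\<lambda>i. back_nbhd (Some (i, 1))"
  have leg_class: "back_nbhd x = ?f i" if "i < length as" "x \<in> leg_vertices as i" for i x
  proof -
    from that(2) obtain j where j: "x = Some (i, Suc j)" "Suc j \<le> as ! i"
      by (auto simp: leg_vertices_def Suc_le_eq dest!: Suc_leD less_imp_Suc_add)
    show ?thesis unfolding j(1) by (rule back_nbhd_along_leg[OF that(1) j(2)])
  qed
  have first: "Some (i, 1) \<in> spider_V as - {None}" if "i < length as" for i
    using legs that by (auto simp: spider_V_def Suc_le_eq)
  have "(\<Sum>i\<in>{i. i < length as \<and> ?f i = K}. as ! i) = s"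
    if "K \<in> back_nbhd ` (spider_V as - {None})" for K
  proof -
    from that obtain v where v: "v \<in> spider_V as" "v \<noteq> None" "K = back_nbhd v" by blast
    have "{x \<in> spider_V as - {None}. back_nbhd x = K}
        = (\<Union>i\<in>{i. i < length as \<and> ?f i = K}. leg_vertices as i)"
      using leg_class unfolding spider_V_eq_insert_UN_leg_vertices by fastforce
    then show ?thesis
      using card_back_nbhd_fiber[OF v(1,2)] v(3) card_UN_class_leg_vertices[of as ?f K] by simp
  qed
  with first show ?thesis unfolding equal_sum_classes_def by blast
qed

end

lemma equal_sum_classes_of_spider_completion:
  assumes "\<exists>E'. is_completion_set (s + 1) (spider_V as) (spider_E as) E' \<and>
             finite E' \<and> card E' = p * s * (s - 1) div 2"
    and "sum_list as = s * p" "\<forall>i<length as. 0 < as ! i \<and> as ! i < s" "s > 0"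
  obtains f :: "nat \<Rightarrow> (nat \<times> nat) option set" and Q
  where "finite Q" "equal_sum_classes as f Q s"
proof -
  from assms(1) obtain E' where "is_completion_set (s + 1) (spider_V as) (spider_E as) E'"
    "finite E'" "card E' = p * s * (s - 1) div 2" by blast
  then interpret tight_spider_completion as s p E'
    using assms(2-4) by unfold_locales
  from equal_sum_classes_of_completion show thesis by (rule that[rotated]) simp
qed

theorem lemma8:
  fixes p s :: nat and as :: "nat list"
  assumes "p \<ge> 1" and "s > 0"
    and "length as = 3 * p"
    and "\<forall>a\<in>set as. s < 4 * a \<and> 2 * a < s"
    and "sum_list as = s * p"
  shows "((\<exists>P :: nat multiset multiset. size P = p \<and> sum_mset P = mset as \<and>
              (\<forall>B\<in>#P. size B = 3 \<and> sum_mset B = s))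
          \<longleftrightarrow> (\<exists>E'. is_completion_set (s + 1) (spider_V as) (spider_E as) E' \<and>
                    finite E' \<and> card E' = p * s * (s - 1) div 2))
       \<and> ((\<exists>P :: nat multiset multiset. size P = p \<and> sum_mset P = mset as \<and>
              (\<forall>B\<in>#P. size B = 3 \<and> sum_mset B = s))
          \<longleftrightarrow> (\<exists>F :: nat \<Rightarrow> (nat \<times> nat) option set set.
                 (\<Union>j<p. F j) = spider_E as \<and>
                 (\<forall>j<p. \<forall>k<p. j \<noteq> k \<longrightarrow> F j \<inter> F k = {}) \<and>
                 (\<forall>j<p. F j \<subseteq> spider_E as \<and> is_tree_edges (F j) \<and> card (F j) = s)))"
    (is "(?P \<longleftrightarrow> ?C) \<and> (_ \<longleftrightarrow> ?T)")
proof -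
  have legs: "\<forall>i<length as. 0 < as ! i \<and> as ! i < s"
    using assms(4) nth_mem by fastforce
  have partition: ?P if "finite Q" "equal_sum_classes as f Q s" for Q and f :: "nat \<Rightarrow> 'q"
    using mset_partition_of_equal_sum_classes[OF that assms(3,4,2)] .
  have "?C \<and> ?T" if ?P
  proof -
    from that obtain P where "size P = p" "sum_mset P = mset as" "\<forall>B\<in>#P. sum_mset B = s"
      by blast
    from equal_sum_classes_of_mset_partition[OF this] obtain g
      where g: "equal_sum_classes as g {..<p} s" ..
    show ?thesis
      using completion_of_equal_sum_classes[OF g] tree_decomposition_of_equal_sum_classes[OF g assms(2)]
        assms(1) by simp
  qed
  moreover have ?P if ?C
    using that by (rule equal_sum_classes_of_spider_completion[OF _ assms(5) legs assms(2)])
      (rule partition)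
  moreover have ?P if ?T
  proof -
    from that obtain F :: "nat \<Rightarrow> (nat \<times> nat) option set set" where
      "(\<Union>j<p. F j) = spider_E as" "\<forall>j<p. \<forall>k<p. j \<noteq> k \<longrightarrow> F j \<inter> F k = {}"
      "\<forall>j<p. F j \<subseteq> spider_E as \<and> is_tree_edges (F j) \<and> card (F j) = s"
      by blast
    from equal_sum_classes_of_tree_decomposition[OF this legs] obtain f
      where "equal_sum_classes as f {..<p} s" ..
    then show ?P by (rule partition[OF finite_lessThan])
  qed
  ultimately show ?thesis by argo
qed

end
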